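(* Let $\Omega\subset\mathbb{R}^n$ be a nonempty closed convex set and $f:\mathbb{R}^n\to\mathbb{R}$ differentiable over $\Omega$ such that (i) $f(\bm{x})\ge\underline{f}$ for all $\bm{x}\in\Omega$, (ii) $\|\nabla f(\bm{x})-\nabla f(\bm{y})\|_2\le L\|\bm{x}-\bm{y}\|_2$ for all $\bm{x},\bm{y}\in\Omega$ for some $L>0$, and (iii) the relaxation sequence $\{\omega_k\}\subset[0,\infty)$ satisfies $\sum_{k=0}^\infty\omega_k<\infty$. Suppose $\{\bm{x}_k\}$ is generated by either IGPM without line search or IGPM with line search (described in the context). Then \[\lim_{k\to\infty}E(\bm{x}_k;\beta)=0,\qquad\text{where } E(\bm{x};\beta):=\|\bm{x}-\mathcal{P}_\Omega(\bm{x}-\beta\nabla f(\bm{x}))\|_2^2 .\]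
   Context: $\mathcal{P}_\Omega$ is Euclidean projection onto $\Omega$. For $\bm{x}_k\in\Omega$ write $\bm{g}_k=\nabla f(\bm{x}_k)$, $\bm{v}_k=\bm{x}_k-\beta\bm{g}_k$ for a fixed $\beta>0$, and define $p(\bm{z};\bm{x}_k)=\tfrac12\|\bm{z}-\bm{v}_k\|_2^2+\delta_\Omega(\bm{z})$ ($\delta_\Omega$ the $0/+\infty$ indicator of $\Omega$), $\Delta p(\bm{z};\bm{x}_k)=p(\bm{x}_k;\bm{x}_k)-p(\bm{z};\bm{x}_k)$, and $q(\bm{u};\bm{x}_k)=-\tfrac12\|\bm{u}-\bm{v}_k\|_2^2-\delta_\Omega^*(\bm{u})+\tfrac12\|\bm{v}_k\|_2^2$ with $\delta^*_\Omega(\bm{u})=\sup_{\bm{x}\in\Omega}\langle\bm{x},\bm{u}\rangle$. An inexact projection at iteration $k$ is a point $\bm{z}_k\in\Omega$ with $\Delta p(\bm{z}_k;\bm{x}_k)\ge0$ together with some dual point $\bm{u}_k$ such that $\frac{p(\bm{x}_k;\bm{x}_k)-p(\bm{z}_k;\bm{x}_k)+\omega_k}{p(\bm{x}_k;\bm{x}_k)-q(\bm{u}_k;\bm{x}_k)+\omega_k}\ge\gamma$, where $0<\gamma<1$. IGPM without line search: $0<\beta\le1/L$, $\bm{x}_0\in\Omega$, and $\bm{x}_{k+1}=\bm{z}_k$ for all $k$. IGPM with line search: fix $0<\eta<1$, $0<\alpha\le1$, $\beta>0$, $0<\theta<1$, $\bm{x}_0\in\Omega$; set $\bm{d}_k=\bm{z}_k-\bm{x}_k$,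 let $\alpha_k$ be the largest value in $\{\theta^i\alpha: i=0,1,2,\dots\}$ with $f(\bm{x}_k+\alpha_k\bm{d}_k)\le f(\bm{x}_k)+\eta\alpha_k\bm{g}_k^T\bm{d}_k$, and set $\bm{x}_{k+1}=\bm{x}_k+\alpha_k\bm{d}_k$. The algorithms are considered as generating infinite sequences. *)

theory Defs
  imports "HOL-Analysis.Analysis"
begin

definition proj :: "'a::euclidean_space set \<Rightarrow> 'a \<Rightarrow> 'a" where
  "proj \<Omega> y = closest_point \<Omega> y"

definition support_fn :: "'a::euclidean_space set \<Rightarrow> 'a \<Rightarrow> ereal" where
  "support_fn \<Omega> u = (SUP x\<in>\<Omega>. ereal (inner x u))"

definition pobj :: "'a::euclidean_space set \<Rightarrow> 'a \<Rightarrow> 'a \<Rightarrow> ereal" where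
  "pobj \<Omega> v z = (if z \<in> \<Omega> then ereal (1/2 * (norm (z - v))\<^sup>2) else \<infinity>)"

definition qobj :: "'a::euclidean_space set \<Rightarrow> 'a \<Rightarrow> 'a \<Rightarrow> ereal" where
  "qobj \<Omega> v u = ereal (- 1/2 * (norm (u - v))\<^sup>2 + 1/2 * (norm v)\<^sup>2) - support_fn \<Omega> u"

text \<open>Inexact projection criterion at x with v = x - beta g, tolerance omega, parameter gamma:
  z in Omega, Delta p(z) >= 0, and the ratio condition, written cross-multiplied.\<close>
definition inexact_proj ::
  "'a::euclidean_space set \<Rightarrow> real \<Rightarrow> real \<Rightarrow> 'a \<Rightarrow> 'a \<Rightarrow> real \<Rightarrow> 'a \<Rightarrow> 'a \<Rightarrow> bool" where
  "inexact_proj \<Omega> \<beta> \<gamma> x g \<omega> z u \<longleftrightarrow>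
     (let v = x - \<beta> *\<^sub>R g in
       z \<in> \<Omega> \<and> pobj \<Omega> v x - pobj \<Omega> v z \<ge> 0 \<and>
       pobj \<Omega> v x - pobj \<Omega> v z + ereal \<omega>
         \<ge> ereal \<gamma> * (pobj \<Omega> v x - qobj \<Omega> v u + ereal \<omega>))"

definition Emeas :: "'a::euclidean_space set \<Rightarrow> ('a \<Rightarrow> 'a) \<Rightarrow> real \<Rightarrow> 'a \<Rightarrow> real" where
  "Emeas \<Omega> grad \<beta> x = (norm (x - proj \<Omega> (x - \<beta> *\<^sub>R grad x)))\<^sup>2"

end

theory Submission
  imports Defs
begin

(* By weak duality, q(u_k) is at most the value of p at the exact projection P(v_k), and the
   variational inequality of the projection gives p(x_k) - p(P(v_k)) >= |x_k - P(v_k)|^2 / 2;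
   so the inexactness criterion yields gamma E(x_k) / 2 <= Delta p(z_k; x_k) + omega_k.
   By the descent lemma for the L-Lipschitz gradient, every iteration decreases f by a fixed
   multiple of Delta p(z_k; x_k): for the full step because beta <= 1/L, for the line search
   because backtracking keeps the accepted step above min(alpha, theta (1 - eta) / (beta L)).
   As f is bounded below, the Delta p(z_k; x_k) are summable, so they, the omega_k and hence
   E(x_k) tend to 0. *)

lemma segment_in_convex:
  assumes "convex S" "y \<in> S" "w \<in> S" "0 \<le> t" "t \<le> 1"
  shows "y + t *\<^sub>R (w - y) \<in> S"
  using convexD_alt[OF assms] by (simp add: algebra_simps)

lemma summable_if_telescoping_decrease:
  fixes F D :: "nat \<Rightarrow> real"
  assumes "0 < c" and decrease: "\<And>k. F (Suc k) \<le> F k - c * D k"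
    and "\<And>k. 0 \<le> D k" and lower: "\<And>k. b \<le> F k"
  shows "summable D"
proof (rule summableI_nonneg_bounded)
  fix n
  have "c * (\<Sum>k<n. D k) \<le> F 0 - F n"
  proof (induction n)
    case (Suc n)
    then show ?case using decrease[of n] by (simp add: algebra_simps)
  qed simp
  then show "(\<Sum>k<n. D k) \<le> (F 0 - b) / c"
    using lower[of n] \<open>0 < c\<close> by (simp add: field_simps)
qed (fact \<open>\<And>k. 0 \<le> D k\<close>)

definition proj_decrease :: "real \<Rightarrow> 'a::real_inner \<Rightarrow> 'a \<Rightarrow> 'a \<Rightarrow> real" where
  "proj_decrease \<beta> x g z =
     (let v = x - \<beta> *\<^sub>R g in 1/2 * (norm (x - v))\<^sup>2 - 1/2 * (norm (z - v))\<^sup>2)"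

lemma proj_decrease_eq:
  "proj_decrease \<beta> x g z = - \<beta> * inner g (z - x) - 1/2 * (norm (z - x))\<^sup>2"
proof -
  have "z - (x - \<beta> *\<^sub>R g) = (z - x) + \<beta> *\<^sub>R g" by (simp add: algebra_simps)
  then show ?thesis
    unfolding proj_decrease_def Let_def power2_norm_eq_inner
    by (simp add: inner_add_left inner_add_right inner_commute algebra_simps power2_eq_square)
qed

lemma pobj_diff_eq_proj_decrease:
  assumes "x \<in> \<Omega>" "z \<in> \<Omega>"
  shows "pobj \<Omega> (x - \<beta> *\<^sub>R g) x - pobj \<Omega> (x - \<beta> *\<^sub>R g) z = ereal (proj_decrease \<beta> x g z)"
  using assms by (simp add: pobj_def proj_decrease_def)

lemma qobj_le_pobj:
  assumes "y \<in> \<Omega>"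
  shows "qobj \<Omega> v u \<le> pobj \<Omega> v y"
proof -
  have "ereal (inner y u) \<le> support_fn \<Omega> u"
    unfolding support_fn_def using assms by (rule SUP_upper)
  then have "qobj \<Omega> v u \<le> ereal (- 1/2 * (norm (u - v))\<^sup>2 + 1/2 * (norm v)\<^sup>2) - ereal (inner y u)"
    unfolding qobj_def by (rule ereal_minus_mono[OF order_refl])
  also have "\<dots> = ereal (1/2 * (norm (y - v))\<^sup>2 - 1/2 * (norm (y + u - v))\<^sup>2)"
    unfolding power2_norm_eq_inner
    by (simp add: inner_diff_left inner_diff_right inner_add_left inner_add_right inner_commute
        algebra_simps)
  also have "\<dots> \<le> pobj \<Omega> v y"
    using assms by (simp add: pobj_def)
  finally show ?thesis .
qed

lemma sq_dist_proj_le: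
  fixes \<Omega> :: "'a::euclidean_space set"
  assumes "closed \<Omega>" "convex \<Omega>" "\<Omega> \<noteq> {}" "x \<in> \<Omega>"
  shows "(norm (x - proj \<Omega> v))\<^sup>2 \<le> (norm (x - v))\<^sup>2 - (norm (proj \<Omega> v - v))\<^sup>2"
proof -
  define P where "P = proj \<Omega> v"
  have "P \<in> \<Omega>" "\<forall>y\<in>\<Omega>. dist v P \<le> dist v y"
    unfolding P_def proj_def using closest_point_exists[OF assms(1,3)] by auto
  then have "inner (v - P) (x - P) \<le> 0"
    using any_closest_point_dot[OF assms(2,1)] assms(4) by blast
  moreover have "(norm (x - v))\<^sup>2 = (norm (x - P))\<^sup>2 - 2 * inner (v - P) (x - P) + (norm (P - v))\<^sup>2"
    by (simp add: power2_norm_eq_inner inner_diff_left inner_diff_right inner_commute algebra_simps)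
  ultimately show ?thesis unfolding P_def by linarith
qed

lemma inexact_proj_stationarity:
  fixes \<Omega> :: "'a::euclidean_space set"
  assumes "closed \<Omega>" "convex \<Omega>" "\<Omega> \<noteq> {}" "x \<in> \<Omega>" "0 < \<gamma>" "0 \<le> \<omega>"
    and "inexact_proj \<Omega> \<beta> \<gamma> x g \<omega> z u"
  shows "z \<in> \<Omega>" and "0 \<le> proj_decrease \<beta> x g z"
    and "\<gamma> / 2 * (norm (x - proj \<Omega> (x - \<beta> *\<^sub>R g)))\<^sup>2 \<le> proj_decrease \<beta> x g z + \<omega>"
proof -
  define v where "v = x - \<beta> *\<^sub>R g"
  define P where "P = proj \<Omega> v"
  have z: "z \<in> \<Omega>" and nonneg: "0 \<le> pobj \<Omega> v x - pobj \<Omega> v z"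
    and ratio: "ereal \<gamma> * (pobj \<Omega> v x - qobj \<Omega> v u + ereal \<omega>)
      \<le> pobj \<Omega> v x - pobj \<Omega> v z + ereal \<omega>"
    using assms(7) unfolding inexact_proj_def v_def Let_def by auto
  have diff_z: "pobj \<Omega> v x - pobj \<Omega> v z = ereal (proj_decrease \<beta> x g z)"
    unfolding v_def using pobj_diff_eq_proj_decrease[OF assms(4) z] .
  show "z \<in> \<Omega>" by (fact z)
  show "0 \<le> proj_decrease \<beta> x g z" using nonneg unfolding diff_z by simp
  have P: "P \<in> \<Omega>"
    unfolding P_def proj_def using closest_point_in_set[OF assms(1,3)] .
  have "ereal (proj_decrease \<beta> x g P) = pobj \<Omega> v x - pobj \<Omega> v P"
    unfolding v_def using pobj_diff_eq_proj_decrease[OF assms(4) P] by simp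
  also have "\<dots> \<le> pobj \<Omega> v x - qobj \<Omega> v u"
    by (rule ereal_minus_mono[OF order_refl qobj_le_pobj[OF P]])
  finally have "ereal (proj_decrease \<beta> x g P) + ereal \<omega>
      \<le> pobj \<Omega> v x - qobj \<Omega> v u + ereal \<omega>"
    by (rule add_right_mono)
  then have "ereal \<gamma> * ereal (proj_decrease \<beta> x g P + \<omega>)
      \<le> ereal \<gamma> * (pobj \<Omega> v x - qobj \<Omega> v u + ereal \<omega>)"
    using assms(5) by (intro ereal_mult_left_mono) simp_all
  also note ratio
  finally have ratio_P: "\<gamma> * (proj_decrease \<beta> x g P + \<omega>) \<le> proj_decrease \<beta> x g z + \<omega>"
    unfolding diff_z by simp
  have "1/2 * (norm (x - P))\<^sup>2 \<le> proj_decrease \<beta> x g P"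
    using sq_dist_proj_le[OF assms(1-4), of v] unfolding proj_decrease_def P_def v_def Let_def
    by (simp add: norm_minus_commute)
  then have "\<gamma> * (1/2 * (norm (x - P))\<^sup>2) \<le> \<gamma> * (proj_decrease \<beta> x g P + \<omega>)"
    using assms(5,6) by (intro mult_left_mono) auto
  with ratio_P
  show "\<gamma> / 2 * (norm (x - proj \<Omega> (x - \<beta> *\<^sub>R g)))\<^sup>2 \<le> proj_decrease \<beta> x g z + \<omega>"
    unfolding P_def v_def by simp
qed

definition armijo ::
  "('a::real_inner \<Rightarrow> real) \<Rightarrow> ('a \<Rightarrow> 'a) \<Rightarrow> real \<Rightarrow> 'a \<Rightarrow> 'a \<Rightarrow> real \<Rightarrow> bool" where
  "armijo f grad \<eta> y d t \<longleftrightarrow> f (y + t *\<^sub>R d) \<le> f y + \<eta> * t * inner (grad y) d"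

definition backtracking_step ::
  "('a::real_inner \<Rightarrow> real) \<Rightarrow> ('a \<Rightarrow> 'a) \<Rightarrow> real \<Rightarrow> real \<Rightarrow> real \<Rightarrow> 'a \<Rightarrow> 'a \<Rightarrow> real \<Rightarrow> bool" where
  "backtracking_step f grad \<eta> \<alpha> \<theta> y d t \<longleftrightarrow>
     (\<exists>i. t = \<theta> ^ i * \<alpha> \<and> armijo f grad \<eta> y d t \<and> (\<forall>j<i. \<not> armijo f grad \<eta> y d (\<theta> ^ j * \<alpha>)))"

locale lipschitz_gradient =
  fixes \<Omega> :: "'a::euclidean_space set" and f :: "'a \<Rightarrow> real" and grad :: "'a \<Rightarrow> 'a" and L :: real
  assumes convex_domain: "convex \<Omega>"
    and has_gradient: "\<And>y. y \<in> \<Omega> \<Longrightarrow> GDERIV f y :> grad y"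
    and grad_lipschitz: "\<And>y w. y \<in> \<Omega> \<Longrightarrow> w \<in> \<Omega> \<Longrightarrow> norm (grad y - grad w) \<le> L * norm (y - w)"
    and L_pos: "0 < L"
begin

lemma descent_lemma:
  assumes y: "y \<in> \<Omega>" and w: "w \<in> \<Omega>"
  shows "f w \<le> f y + inner (grad y) (w - y) + L / 2 * (norm (w - y))\<^sup>2"
proof -
  define d where "d = w - y"
  define \<psi> where "\<psi> t = f (y + t *\<^sub>R d) - t * inner (grad y) d - L / 2 * t\<^sup>2 * (norm d)\<^sup>2" for t
  define \<psi>' where "\<psi>' t = inner d (grad (y + t *\<^sub>R d)) - inner (grad y) d - L * t * (norm d)\<^sup>2" for t
  have on_segment: "y + t *\<^sub>R d \<in> \<Omega>" if "0 \<le> t" "t \<le> 1" for t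
    unfolding d_def using segment_in_convex[OF convex_domain y w that] .
  have "(\<psi> has_real_derivative \<psi>' t) (at t)" if "0 \<le> t" "t \<le> 1" for t
  proof -
    have "((\<lambda>s. y + s *\<^sub>R d) has_derivative (\<lambda>h. h *\<^sub>R d)) (at t)"
      by (auto intro!: derivative_eq_intros)
    moreover have "(f has_derivative (\<lambda>h. inner h (grad (y + t *\<^sub>R d)))) (at (y + t *\<^sub>R d))"
      using has_gradient[OF on_segment[OF that]] by (simp add: gderiv_def)
    ultimately have "((\<lambda>s. f (y + s *\<^sub>R d)) has_real_derivative inner d (grad (y + t *\<^sub>R d))) (at t)"
      by (rule has_derivative_imp_has_field_derivative[OF has_derivative_compose]) simp
    then show ?thesis unfolding \<psi>_def \<psi>'_def
      by (auto intro!: derivative_eq_intros)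
  qed
  then obtain \<xi> where \<xi>: "0 < \<xi>" "\<xi> < 1" and mvt: "\<psi> 1 - \<psi> 0 = \<psi>' \<xi>"
    using MVT2[of 0 1 \<psi> \<psi>'] by auto
  have "inner d (grad (y + \<xi> *\<^sub>R d)) - inner (grad y) d = inner (grad (y + \<xi> *\<^sub>R d) - grad y) d"
    by (simp add: inner_diff_left inner_diff_right inner_commute)
  also have "\<dots> \<le> norm (grad (y + \<xi> *\<^sub>R d) - grad y) * norm d"
    by (rule norm_cauchy_schwarz)
  also have "\<dots> \<le> L * norm (\<xi> *\<^sub>R d) * norm d"
    using grad_lipschitz[OF on_segment y] \<xi> by (intro mult_right_mono) auto
  also have "\<dots> = L * \<xi> * (norm d)\<^sup>2"
    using \<xi> by (simp add: power2_eq_square)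
  finally have "\<psi>' \<xi> \<le> 0" unfolding \<psi>'_def by simp
  with mvt show ?thesis by (simp add: \<psi>_def d_def)
qed

lemma gradient_step_decrease:
  assumes "y \<in> \<Omega>" "w \<in> \<Omega>" "0 < \<beta>" "\<beta> \<le> 1 / L"
  shows "f w \<le> f y - proj_decrease \<beta> y (grad y) w / \<beta>"
proof -
  have "f w \<le> f y + inner (grad y) (w - y) + L / 2 * (norm (w - y))\<^sup>2"
    by (rule descent_lemma[OF assms(1,2)])
  also have "\<dots> \<le> f y + inner (grad y) (w - y) + 1 / (2 * \<beta>) * (norm (w - y))\<^sup>2"
  proof -
    have "L / 2 \<le> 1 / (2 * \<beta>)" using assms(3,4) L_pos by (simp add: field_simps)
    then show ?thesis by (intro add_left_mono mult_right_mono) auto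
  qed
  also have "\<dots> = f y - proj_decrease \<beta> y (grad y) w / \<beta>"
    using assms(3) by (simp add: proj_decrease_eq field_simps)
  finally show ?thesis .
qed

lemma rejected_armijo_step_gt:
  assumes y: "y \<in> \<Omega>" and w: "w \<in> \<Omega>" and "0 < \<beta>" "\<eta> < 1" "0 < t" "t \<le> 1"
    and decrease_nonneg: "0 \<le> proj_decrease \<beta> y (grad y) w"
    and rejected: "\<not> armijo f grad \<eta> y (w - y) t"
  shows "(1 - \<eta>) / (\<beta> * L) < t"
proof -
  define G where "G = inner (grad y) (w - y)"
  define N where "N = (norm (w - y))\<^sup>2"
  have "f (y + t *\<^sub>R (w - y)) \<le> f y + t * G + L / 2 * (t\<^sup>2 * N)"
    using descent_lemma[OF y segment_in_convex[OF convex_domain y w]] assms(5,6)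
    by (simp add: G_def N_def power_mult_distrib)
  with rejected have "t * ((1 - \<eta>) * - G) < t * (L / 2 * t * N)"
    unfolding armijo_def G_def by (simp add: algebra_simps power2_eq_square)
  then have slope: "(1 - \<eta>) * - G < L / 2 * t * N"
    using \<open>0 < t\<close> mult_less_cancel_left_pos by blast
  have "N / 2 \<le> \<beta> * - G"
    using decrease_nonneg by (simp add: proj_decrease_eq G_def N_def)
  then have "(1 - \<eta>) * (N / 2) \<le> \<beta> * ((1 - \<eta>) * - G)"
    using \<open>\<eta> < 1\<close> mult_left_mono[of "N / 2" "\<beta> * - G" "1 - \<eta>"] by (simp add: ac_simps)
  also have "\<dots> < \<beta> * (L / 2 * t * N)"
    using mult_strict_left_mono[OF slope \<open>0 < \<beta>\<close>] .
  finally have "(1 - \<eta>) * N < (\<beta> * L * t) * N" by simp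
  then have "1 - \<eta> < \<beta> * L * t"
    using N_def by (smt (verit) mult_right_mono zero_le_power2)
  then show ?thesis
    using \<open>0 < \<beta>\<close> L_pos by (simp add: field_simps)
qed

lemma backtracking_step_bounds:
  assumes step: "backtracking_step f grad \<eta> \<alpha> \<theta> y (w - y) t"
    and y: "y \<in> \<Omega>" and w: "w \<in> \<Omega>" and "0 < \<beta>" "\<eta> < 1" "0 < \<alpha>" "\<alpha> \<le> 1" "0 < \<theta>" "\<theta> < 1"
    and "0 \<le> proj_decrease \<beta> y (grad y) w"
  shows "min \<alpha> (\<theta> * (1 - \<eta>) / (\<beta> * L)) \<le> t" and "0 < t" and "t \<le> 1"
proof -
  have trial_step: "0 < \<theta> ^ j * \<alpha> \<and> \<theta> ^ j * \<alpha> \<le> 1" for j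
    using \<open>0 < \<theta>\<close> \<open>\<theta> < 1\<close> \<open>0 < \<alpha>\<close> \<open>\<alpha> \<le> 1\<close> mult_mono[of "\<theta> ^ j" 1 \<alpha> 1]
    by (simp add: power_le_one)
  obtain i where t: "t = \<theta> ^ i * \<alpha>" and rejected: "\<forall>j<i. \<not> armijo f grad \<eta> y (w - y) (\<theta> ^ j * \<alpha>)"
    using step unfolding backtracking_step_def by blast
  show "0 < t" and "t \<le> 1" using t trial_step by simp_all
  show "min \<alpha> (\<theta> * (1 - \<eta>) / (\<beta> * L)) \<le> t"
  proof (cases i)
    case 0
    then show ?thesis using t by simp
  next
    case (Suc j)
    have "(1 - \<eta>) / (\<beta> * L) < \<theta> ^ j * \<alpha>"
      using rejected_armijo_step_gt[OF y w] rejected Suc trial_step assms by blast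
    then have "\<theta> * ((1 - \<eta>) / (\<beta> * L)) \<le> \<theta> * (\<theta> ^ j * \<alpha>)"
      using \<open>0 < \<theta>\<close> by (intro mult_left_mono) auto
    then show ?thesis using t Suc by (simp add: min_le_iff_disj ac_simps)
  qed
qed

lemma backtracking_step_decrease:
  assumes step: "backtracking_step f grad \<eta> \<alpha> \<theta> y (w - y) t"
    and y: "y \<in> \<Omega>" and w: "w \<in> \<Omega>" and "0 < \<beta>" "0 < \<eta>" "\<eta> < 1" "0 < \<alpha>" "\<alpha> \<le> 1" "0 < \<theta>" "\<theta> < 1"
    and decrease_nonneg: "0 \<le> proj_decrease \<beta> y (grad y) w"
  shows "f (y + t *\<^sub>R (w - y))
    \<le> f y - \<eta> * min \<alpha> (\<theta> * (1 - \<eta>) / (\<beta> * L)) / \<beta> * proj_decrease \<beta> y (grad y) w"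
proof -
  define D where "D = proj_decrease \<beta> y (grad y) w"
  have "min \<alpha> (\<theta> * (1 - \<eta>) / (\<beta> * L)) \<le> t" and "0 < t"
    using backtracking_step_bounds[OF step y w] assms by blast+
  then have "\<eta> * min \<alpha> (\<theta> * (1 - \<eta>) / (\<beta> * L)) * (D / \<beta>) \<le> \<eta> * t * (D / \<beta>)"
    using \<open>0 < \<eta>\<close> \<open>0 < \<beta>\<close> decrease_nonneg unfolding D_def by (intro mult_right_mono) auto
  moreover have "\<eta> * t * inner (grad y) (w - y) \<le> \<eta> * t * (- D / \<beta>)"
  proof -
    have "inner (grad y) (w - y) \<le> - D / \<beta>"
      using \<open>0 < \<beta>\<close> unfolding D_def proj_decrease_eq by (simp add: field_simps)
    moreover have "0 \<le> \<eta> * t"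
      using \<open>0 < \<eta>\<close> \<open>0 < t\<close> by simp
    ultimately show ?thesis by (rule mult_left_mono)
  qed
  moreover have "armijo f grad \<eta> y (w - y) t"
    using step unfolding backtracking_step_def by blast
  ultimately show ?thesis unfolding armijo_def D_def by simp
qed

end

locale igpm = lipschitz_gradient \<Omega> f grad L
  for \<Omega> :: "'a::euclidean_space set" and f grad L +
  fixes \<beta> \<gamma> :: real and \<omega> :: "nat \<Rightarrow> real" and x z u :: "nat \<Rightarrow> 'a"
  assumes closed_domain: "closed \<Omega>" and nonempty_domain: "\<Omega> \<noteq> {}"
    and step_pos: "0 < \<beta>" and ratio_pos: "0 < \<gamma>" and tolerance_nonneg: "\<And>k. 0 \<le> \<omega> k"
    and start_in_domain: "x 0 \<in> \<Omega>"
    and inexact: "\<And>k. inexact_proj \<Omega> \<beta> \<gamma> (x k) (grad (x k)) (\<omega> k) (z k) (u k)"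
begin

definition sufficient_descent :: "real \<Rightarrow> bool" where
  "sufficient_descent c \<longleftrightarrow> 0 < c \<and>
     (\<forall>k. x k \<in> \<Omega> \<and> f (x (Suc k)) \<le> f (x k) - c * proj_decrease \<beta> (x k) (grad (x k)) (z k))"

lemma trial_point_in_domain: "z k \<in> \<Omega>"
  using inexact[of k] unfolding inexact_proj_def Let_def by blast

lemma proj_decrease_nonneg: "x k \<in> \<Omega> \<Longrightarrow> 0 \<le> proj_decrease \<beta> (x k) (grad (x k)) (z k)"
  using inexact_proj_stationarity(2)[OF closed_domain convex_domain nonempty_domain _ ratio_pos
      tolerance_nonneg inexact] .

lemma stationarity_le:
  assumes "x k \<in> \<Omega>"
  shows "Emeas \<Omega> grad \<beta> (x k) \<le> 2 / \<gamma> * (proj_decrease \<beta> (x k) (grad (x k)) (z k) + \<omega> k)"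
proof -
  have "\<gamma> / 2 * Emeas \<Omega> grad \<beta> (x k) \<le> proj_decrease \<beta> (x k) (grad (x k)) (z k) + \<omega> k"
    unfolding Emeas_def
    by (rule inexact_proj_stationarity(3)[OF closed_domain convex_domain nonempty_domain assms
          ratio_pos tolerance_nonneg inexact])
  then show ?thesis
    using ratio_pos by (simp add: pos_le_divide_eq mult.commute)
qed

lemma constant_step_sufficient_descent:
  assumes "\<beta> \<le> 1 / L" and "\<And>k. x (Suc k) = z k"
  shows "sufficient_descent (1 / \<beta>)"
proof -
  have x: "x k \<in> \<Omega>" for k
    by (cases k) (simp_all add: start_in_domain assms(2) trial_point_in_domain)
  have "f (x (Suc k)) \<le> f (x k) - 1 / \<beta> * proj_decrease \<beta> (x k) (grad (x k)) (z k)" for k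
    using gradient_step_decrease[OF x trial_point_in_domain step_pos assms(1)] assms(2) by simp
  with x step_pos show ?thesis
    unfolding sufficient_descent_def by simp
qed

lemma backtracking_sufficient_descent:
  assumes "0 < \<eta>" "\<eta> < 1" "0 < \<alpha>" "\<alpha> \<le> 1" "0 < \<theta>" "\<theta> < 1"
    and step: "\<And>k. backtracking_step f grad \<eta> \<alpha> \<theta> (x k) (z k - x k) (a k)"
    and update: "\<And>k. x (Suc k) = x k + a k *\<^sub>R (z k - x k)"
  shows "sufficient_descent (\<eta> * min \<alpha> (\<theta> * (1 - \<eta>) / (\<beta> * L)) / \<beta>)"
proof -
  have x: "x k \<in> \<Omega>" for k
  proof (induction k)
    case (Suc k)
    have "0 < a k" "a k \<le> 1"
      using backtracking_step_bounds(2,3)[OF step Suc trial_point_in_domain step_pos assms(2-6)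
          proj_decrease_nonneg[OF Suc]] by simp_all
    then show ?case
      using segment_in_convex[OF convex_domain Suc trial_point_in_domain] update by simp
  qed (fact start_in_domain)
  have "f (x (Suc k)) \<le> f (x k) - \<eta> * min \<alpha> (\<theta> * (1 - \<eta>) / (\<beta> * L)) / \<beta>
      * proj_decrease \<beta> (x k) (grad (x k)) (z k)" for k
    unfolding update
    by (rule backtracking_step_decrease[OF step x trial_point_in_domain step_pos assms(1-6)
        proj_decrease_nonneg[OF x]])
  moreover have "0 < \<eta> * min \<alpha> (\<theta> * (1 - \<eta>) / (\<beta> * L)) / \<beta>"
    using assms(1-6) step_pos L_pos by (auto intro!: divide_pos_pos mult_pos_pos)
  ultimately show ?thesis
    unfolding sufficient_descent_def using x by blast
qed

lemma stationarity_tendsto_zero: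
  assumes "sufficient_descent c" and lower: "\<And>y. y \<in> \<Omega> \<Longrightarrow> flow \<le> f y" and "summable \<omega>"
  shows "(\<lambda>k. Emeas \<Omega> grad \<beta> (x k)) \<longlonglongrightarrow> 0"
proof -
  define D where "D k = proj_decrease \<beta> (x k) (grad (x k)) (z k)" for k
  have "0 < c" and x: "\<And>k. x k \<in> \<Omega>" and descent: "\<And>k. f (x (Suc k)) \<le> f (x k) - c * D k"
    using assms(1) unfolding sufficient_descent_def D_def by blast+
  have "summable D"
    by (rule summable_if_telescoping_decrease[where F = "\<lambda>k. f (x k)", OF \<open>0 < c\<close> descent])
      (use proj_decrease_nonneg[OF x] lower[OF x] in \<open>simp_all add: D_def\<close>)
  then have "(\<lambda>k. 2 / \<gamma> * (D k + \<omega> k)) \<longlonglongrightarrow> 2 / \<gamma> * (0 + 0)"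
    using \<open>summable \<omega>\<close> by (intro tendsto_intros summable_LIMSEQ_zero)
  then have bound_to_zero: "(\<lambda>k. 2 / \<gamma> * (D k + \<omega> k)) \<longlonglongrightarrow> 0"
    by simp
  have "\<forall>k. norm (Emeas \<Omega> grad \<beta> (x k)) \<le> 2 / \<gamma> * (D k + \<omega> k)"
    using stationarity_le[OF x] unfolding D_def by (simp add: Emeas_def)
  from Lim_null_comparison[OF always_eventually[OF this] bound_to_zero] show ?thesis .
qed

end

theorem theorem3p6:
  fixes \<Omega> :: "'a::euclidean_space set"
    and f :: "'a \<Rightarrow> real" and grad :: "'a \<Rightarrow> 'a"
    and L flow \<beta> \<gamma> :: real
    and \<omega> :: "nat \<Rightarrow> real"
    and x z u :: "nat \<Rightarrow> 'a"
  assumes "\<Omega> \<noteq> {}" and "closed \<Omega>" and "convex \<Omega>"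
    and deriv: "\<And>y. y \<in> \<Omega> \<Longrightarrow> GDERIV f y :> grad y"
    and lower: "\<And>y. y \<in> \<Omega> \<Longrightarrow> f y \<ge> flow"
    and "L > 0"
    and lip: "\<And>y w. y \<in> \<Omega> \<Longrightarrow> w \<in> \<Omega> \<Longrightarrow> norm (grad y - grad w) \<le> L * norm (y - w)"
    and omega_nonneg: "\<And>k. \<omega> k \<ge> 0" and "summable \<omega>"
    and "0 < \<gamma>" and "\<gamma> < 1" and "\<beta> > 0"
    and "x 0 \<in> \<Omega>"
    and inexact: "\<And>k. inexact_proj \<Omega> \<beta> \<gamma> (x k) (grad (x k)) (\<omega> k) (z k) (u k)"
    and alg: "(\<beta> \<le> 1 / L \<and> (\<forall>k. x (Suc k) = z k))
      \<or> (\<exists>\<eta> \<alpha> \<theta> (a :: nat \<Rightarrow> real). 0 < \<eta> \<and> \<eta> < 1 \<and> 0 < \<alpha> \<and> \<alpha> \<le> 1 \<and> 0 < \<theta> \<and> \<theta> < 1 \<and>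
           (\<forall>k. let d = z k - x k;
                     armijo = (\<lambda>t. f (x k + t *\<^sub>R d) \<le> f (x k) + \<eta> * t * inner (grad (x k)) d)
                 in (\<exists>i. a k = \<theta> ^ i * \<alpha> \<and> armijo (a k) \<and> (\<forall>j<i. \<not> armijo (\<theta> ^ j * \<alpha>)))
                    \<and> x (Suc k) = x k + a k *\<^sub>R d))"
  shows "(\<lambda>k. Emeas \<Omega> grad \<beta> (x k)) \<longlonglongrightarrow> 0"
proof -
  interpret igpm \<Omega> f grad L \<beta> \<gamma> \<omega> x z u
    by unfold_locales (use assms in auto)
  consider (constant_step) "\<beta> \<le> 1 / L" "\<And>k. x (Suc k) = z k"
    | (backtracking) \<eta> \<alpha> \<theta> a where "0 < \<eta>" "\<eta> < 1" "0 < \<alpha>" "\<alpha> \<le> 1" "0 < \<theta>" "\<theta> < 1"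
        "\<And>k. backtracking_step f grad \<eta> \<alpha> \<theta> (x k) (z k - x k) (a k)"
        "\<And>k. x (Suc k) = x k + a k *\<^sub>R (z k - x k)"
    using alg unfolding backtracking_step_def armijo_def Let_def by (elim disjE exE conjE) blast+
  then obtain c where "sufficient_descent c"
  proof cases
    case constant_step
    then show ?thesis using constant_step_sufficient_descent that by blast
  next
    case backtracking
    then show ?thesis using backtracking_sufficient_descent that by blast
  qed
  then show ?thesis
    using stationarity_tendsto_zero lower \<open>summable \<omega>\<close> by blast
qed

end
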